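(* Let $i\ge 2$ be an integer and let $f^{[i]}_n$ ($n\ge 1$) be the $i$-Fibonacci words. Then for every $n\ge 1$, $$X^{[i]}\big(f^{[i]}_n\big)=f^{[i]}_{n+1}.$$
   Context: For an integer $i\ge 2$, the $i$-Fibonacci words are finite words over the alphabet $\{0,1\}$ defined by $f^{[i]}_1=0$, $f^{[i]}_2=0^{i-1}1$ (where $0^{i-1}$ denotes $i-1$ consecutive $0$'s), and $f^{[i]}_n=f^{[i]}_{n-1}f^{[i]}_{n-2}$ (concatenation) for $n\ge 3$. The substitution $X^{[i]}$ acts on words that are written as concatenations of the two blocks $0$ and $0^{i-1}1$. Such a decomposition, when it exists, is unique: each letter $1$ forms a block together with the $i-1$ zeros immediately preceding it, and every other $0$ is a block by itself. $X^{[i]}$ replaces each block independently: the block $0$ is replaced by $0^{i-1}1$, and the block $0^{i-1}1$ is replaced by $0^{i-1}10$. The result is again a concatenation of such blocks. In the statement, $X^{[i]}$ is applied to $f^{[i]}_n$ written in its block decomposition. *)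

theory Defs
  imports Main
begin

text \<open>Words over the alphabet {0,1} are lists of naturals.\<close>

fun fibw :: "nat \<Rightarrow> nat \<Rightarrow> nat list" where
  "fibw i 0 = []"
| "fibw i (Suc 0) = [0]"
| "fibw i (Suc (Suc 0)) = replicate (i - 1) 0 @ [1]"
| "fibw i (Suc (Suc (Suc n))) = fibw i (Suc (Suc n)) @ fibw i (Suc n)"

datatype block = A | B

fun block_word :: "nat \<Rightarrow> block \<Rightarrow> nat list" where
  "block_word i A = [0]"
| "block_word i B = replicate (i - 1) 0 @ [1]"

text \<open>Image of a block under the substitution X^[i]:
  0 maps to 0^(i-1)1, and 0^(i-1)1 maps to 0^(i-1)10.\<close>
fun X_block :: "block \<Rightarrow> block list" where
  "X_block A = [B]"
| "X_block B = [B, A]"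

definition is_block_decomp :: "nat \<Rightarrow> block list \<Rightarrow> nat list \<Rightarrow> bool" where
  "is_block_decomp i bs w \<longleftrightarrow> concat (map (block_word i) bs) = w"

text \<open>X^[i] applied to w, via its (unique, when existing) block decomposition.\<close>
definition X_subst :: "nat \<Rightarrow> nat list \<Rightarrow> nat list" where
  "X_subst i w = concat (map (block_word i) (concat (map X_block (THE bs. is_block_decomp i bs w))))"

end

theory Submission
  imports Defs
begin

text \<open>The block decomposition of \<open>f\<^sub>n\<close> obeys the Fibonacci recursion itself, and \<open>X\<close> maps it to
  the decomposition of \<open>f\<^sub>n\<^sub>+\<^sub>1\<close>. Uniqueness holds because, for \<open>i \<ge> 2\<close>, the two blocks end in
  different letters, so a decomposition can be read off from the right.\<close>

fun fib_blocks :: "nat \<Rightarrow> block list" where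
  "fib_blocks 0 = []"
| "fib_blocks (Suc 0) = [A]"
| "fib_blocks (Suc (Suc 0)) = [B]"
| "fib_blocks (Suc (Suc (Suc n))) = fib_blocks (Suc (Suc n)) @ fib_blocks (Suc n)"

lemma is_block_decomp_fib_blocks: "is_block_decomp i (fib_blocks n) (fibw i n)"
  unfolding is_block_decomp_def by (induction n rule: fib_blocks.induct) auto

lemma concat_X_block_fib_blocks:
  "n \<ge> 1 \<Longrightarrow> concat (map X_block (fib_blocks n)) = fib_blocks (Suc n)"
  by (induction n rule: fib_blocks.induct) auto

lemma block_word_nonempty [simp]: "block_word i b \<noteq> []"
  by (cases b) auto

lemma block_word_last_eq_iff:
  "i \<ge> 2 \<Longrightarrow> last (block_word i b) = last (block_word i c) \<longleftrightarrow> b = c"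
  by (cases b; cases c) auto

lemma concat_block_word_eq_Nil_iff: "concat (map (block_word i) bs) = [] \<longleftrightarrow> bs = []"
  by (induction bs) auto

lemma concat_block_word_inject:
  assumes "i \<ge> 2" and "concat (map (block_word i) bs) = concat (map (block_word i) cs)"
  shows "bs = cs"
  using assms(2)
proof (induction bs arbitrary: cs rule: rev_induct)
  case Nil
  then show ?case by (simp add: concat_block_word_eq_Nil_iff)
next
  case (snoc b bs)
  then obtain cs' c where cs: "cs = cs' @ [c]"
    by (metis concat_block_word_eq_Nil_iff snoc_eq_iff_butlast)
  have eq: "concat (map (block_word i) bs) @ block_word i b
          = concat (map (block_word i) cs') @ block_word i c"
    using snoc.prems cs by simp
  then have "last (block_word i b) = last (block_word i c)"
    by (metis block_word_nonempty last_appendR)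
  then have "b = c"
    using block_word_last_eq_iff[OF assms(1)] by blast
  with eq snoc.IH cs show ?case by simp
qed

lemma block_decomp_unique:
  assumes "i \<ge> 2" and "is_block_decomp i bs w"
  shows "is_block_decomp i cs w \<longleftrightarrow> cs = bs"
  using assms(2) concat_block_word_inject[OF assms(1)] unfolding is_block_decomp_def by metis

lemma X_subst_eq:
  assumes "i \<ge> 2" and "is_block_decomp i bs w"
  shows "X_subst i w = concat (map (block_word i) (concat (map X_block bs)))"
proof -
  have "(THE cs. is_block_decomp i cs w) = bs"
    using block_decomp_unique[OF assms] by simp
  then show ?thesis unfolding X_subst_def by simp
qed

theorem proposition2p2:
  fixes i n :: nat
  assumes "i \<ge> 2" and "n \<ge> 1"
  shows "(\<exists>!bs. is_block_decomp i bs (fibw i n)) \<and> X_subst i (fibw i n) = fibw i (Suc n)"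
proof
  show "\<exists>!bs. is_block_decomp i bs (fibw i n)"
    using block_decomp_unique[OF assms(1) is_block_decomp_fib_blocks] by simp
  have "X_subst i (fibw i n) = concat (map (block_word i) (fib_blocks (Suc n)))"
    unfolding X_subst_eq[OF assms(1) is_block_decomp_fib_blocks] concat_X_block_fib_blocks[OF assms(2)] ..
  also have "\<dots> = fibw i (Suc n)"
    using is_block_decomp_fib_blocks unfolding is_block_decomp_def .
  finally show "X_subst i (fibw i n) = fibw i (Suc n)" .
qed

end
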